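(* Fix an $\mathrm{HNN}_k$ architecture with parameter vector $\Theta\in\mathbb{R}^m$, and denote by $v_\Theta$ the corresponding network function. Let $\Omega\subset\mathbb{R}^d$ be a domain of finite measure. There exists a set $\mathcal N\subset\mathbb{R}^m$ such that: 1. if $\Theta_0\notin\mathcal N$, then for every sequence $\{\Theta_n\}_{n\in\mathbb{N}}\subset\mathbb{R}^m$ converging to $\Theta_0$, $v_{\Theta_n}\to v_{\Theta_0}$ in $L^2(\Omega)$; 2. if $\Omega$ is bounded, each $\Theta\in\mathcal N$ admits $\Theta'\notin\mathcal N$ satisfying $v_\Theta\equiv v_{\Theta'}$ in $\Omega$. Moreover, $\mathcal N$ is a finite union of subspaces of $\mathbb{R}^m$, each of dimension $m-d$ (in particular, $\mathcal N$ has Lebesgue measure zero).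
   Context: $\mathrm{HNN}_k$ networks are functions $v(x)=\Theta^k\circ\sigma\circ\Theta^{k-1}\circ\sigma\circ\cdots\circ\Theta^1\circ\sigma_s\circ\Theta^0(x)$, $x\in\mathbb{R}^d$, with affine maps $\Theta^j:\mathbb{R}^{n_j}\to\mathbb{R}^{n_{j+1}}$ ($n_0=d$, $n_{k+1}=1$) whose coefficients form the parameter vector $\Theta\in\mathbb{R}^m$, $\sigma=\mathrm{ReLU}$, and $\sigma_s=H$ the Heaviside function ($H(t)=1$ for $t\ge0$, $0$ for $t<0$); activations are applied componentwise. In particular the first layer is $x\mapsto(H(a_1\cdot x+b_1),\dots,H(a_\ell\cdot x+b_\ell))$ with $a_i\in\mathbb{R}^d$, $b_i\in\mathbb{R}$. *)

theory Defs
  imports "HOL-Analysis.Analysis"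
begin

definition heaviside :: "real \<Rightarrow> real" where
  "heaviside t = (if t \<ge> 0 then 1 else 0)"

definition relu :: "real \<Rightarrow> real" where
  "relu t = max 0 t"

text \<open>An architecture is a list of widths ns = [n_0, n_1, ..., n_k, n_{k+1}]
  with n_0 = d and n_{k+1} = 1.  The affine map Theta^j : R^{n_j} -> R^{n_{j+1}}
  has (n_j + 1) * n_{j+1} coefficients.  Parameters are laid out in a flat vector
  P :: nat => real: layer by layer, and inside layer j row by row, each row r
  consisting of the n_j weights followed by the bias.\<close>

definition nparams :: "nat list \<Rightarrow> nat" where
  "nparams ns = (\<Sum>j<length ns - 1. (ns!j + 1) * ns!(Suc j))"

definition layer_offset :: "nat list \<Rightarrow> nat \<Rightarrow> nat" where
  "layer_offset ns j = (\<Sum>i<j. (ns!i + 1) * ns!(Suc i))"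

definition wt :: "nat list \<Rightarrow> (nat \<Rightarrow> real) \<Rightarrow> nat \<Rightarrow> nat \<Rightarrow> nat \<Rightarrow> real" where
  "wt ns P j r c = P (layer_offset ns j + r * (ns!j + 1) + c)"

definition bs :: "nat list \<Rightarrow> (nat \<Rightarrow> real) \<Rightarrow> nat \<Rightarrow> nat \<Rightarrow> real" where
  "bs ns P j r = P (layer_offset ns j + r * (ns!j + 1) + ns!j)"

definition aff :: "nat list \<Rightarrow> (nat \<Rightarrow> real) \<Rightarrow> nat \<Rightarrow> (nat \<Rightarrow> real) \<Rightarrow> nat \<Rightarrow> real" where
  "aff ns P j y r = (\<Sum>c<ns!j. wt ns P j r c * y c) + bs ns P j r"

text \<open>hid ns P x j = output of hidden layer j+1 (after its activation).\<close>
fun hid :: "nat list \<Rightarrow> (nat \<Rightarrow> real) \<Rightarrow> (nat \<Rightarrow> real) \<Rightarrow> nat \<Rightarrow> nat \<Rightarrow> real" where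
  "hid ns P x 0 = (\<lambda>r. heaviside (aff ns P 0 x r))"
| "hid ns P x (Suc j) = (\<lambda>r. relu (aff ns P (Suc j) (hid ns P x j) r))"

text \<open>The network function, with k = length ns - 2.\<close>
definition net :: "nat list \<Rightarrow> (nat \<Rightarrow> real) \<Rightarrow> (nat \<Rightarrow> real) \<Rightarrow> real" where
  "net ns P x = aff ns P (length ns - 2) (hid ns P x (length ns - 3)) 0"

text \<open>The network function v_Theta on R^d for a parameter vector Theta in R^m,
  where the coordinates of R^m (resp. R^d) are enumerated by enum (resp. ein).\<close>
definition hnn :: "nat list \<Rightarrow> (nat \<Rightarrow> 'm::finite) \<Rightarrow> (nat \<Rightarrow> 'd::finite)
    \<Rightarrow> real^'m \<Rightarrow> real^'d \<Rightarrow> real" where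
  "hnn ns enum ein \<Theta> x = net ns (\<lambda>p. \<Theta> $ enum p) (\<lambda>c. x $ ein c)"

end

theory Submission
  imports Defs
begin

text \<open>Only the Heaviside layer makes \<open>\<Theta> \<mapsto> v\<^sub>\<Theta>(x)\<close> discontinuous, and only at
  parameters where some first-layer preactivation \<open>a\<^sub>r \<bullet> x + b\<^sub>r\<close> vanishes. If every
  weight vector \<open>a\<^sub>r\<close> of \<open>\<Theta>\<^sub>0\<close> is nonzero, these \<open>x\<close> lie on finitely many hyperplanes,
  a null set; since the networks are uniformly bounded for bounded parameters, dominated
  convergence gives \<open>L\<^sup>2\<close> convergence. Hence \<open>\<N>\<close> is the union over the first-layer
  neurons \<open>r\<close> of the coordinate subspaces \<open>{a\<^sub>r = 0}\<close>, each of codimension \<open>d\<close>. A neuron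
  with \<open>a\<^sub>r = 0\<close> is the constant \<open>H(b\<^sub>r)\<close>; on a bounded \<open>\<Omega>\<close> the weights \<open>a\<^sub>r = (\<epsilon>,\<dots>,\<epsilon>)\<close>
  and bias \<open>\<plusminus>1\<close> (with the sign of \<open>b\<^sub>r\<close>) produce the same constant for small \<open>\<epsilon>\<close>, which moves
  \<open>\<Theta>\<close> out of \<open>\<N>\<close> without changing \<open>v\<^sub>\<Theta>\<close> on \<open>\<Omega>\<close>.\<close>

lemma layer_offset_Suc: "layer_offset ns (Suc j) = layer_offset ns j + (ns!j + 1) * ns!(Suc j)"
  by (simp add: layer_offset_def)

lemma layer_offset_mono: "i \<le> j \<Longrightarrow> layer_offset ns i \<le> layer_offset ns j"
  unfolding layer_offset_def by (rule sum_mono2) auto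

lemma layer_offset_le_nparams: "j < length ns \<Longrightarrow> layer_offset ns j \<le> nparams ns"
  unfolding layer_offset_def nparams_def by (rule sum_mono2) auto

lemma param_index_less_layer_offset:
  assumes "r < ns!(Suc j)" "c \<le> ns!j"
  shows "layer_offset ns j + r * (ns!j + 1) + c < layer_offset ns (Suc j)"
proof -
  have "r * (ns!j + 1) + c < (r + 1) * (ns!j + 1)" using assms by simp
  also have "\<dots> \<le> ns!(Suc j) * (ns!j + 1)" using assms by (intro mult_right_mono) auto
  finally show ?thesis by (simp add: layer_offset_Suc mult.commute)
qed

lemma param_index_less_nparams:
  assumes "r < ns!(Suc j)" "c \<le> ns!j" "Suc j < length ns"
  shows "layer_offset ns j + r * (ns!j + 1) + c < nparams ns"
  using param_index_less_layer_offset[OF assms(1,2)] layer_offset_le_nparams[OF assms(3)] by linarith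

lemma aff_cong:
  assumes "\<And>c. c < ns!j \<Longrightarrow> y c = y' c"
    and "\<And>c. c \<le> ns!j \<Longrightarrow>
      P (layer_offset ns j + r * (ns!j + 1) + c) = Q (layer_offset ns j + r * (ns!j + 1) + c)"
  shows "aff ns P j y r = aff ns Q j y' r"
  unfolding aff_def wt_def bs_def using assms by (intro arg_cong2[where f="(+)"] sum.cong) auto

lemma hid_cong:
  assumes PQ: "\<And>p. layer_offset ns 1 \<le> p \<Longrightarrow> p < nparams ns \<Longrightarrow> P p = Q p"
    and first: "\<And>r. r < ns!1 \<Longrightarrow> hid ns P x 0 r = hid ns Q x 0 r"
    and "Suc j < length ns" "r < ns!(Suc j)"
  shows "hid ns P x j r = hid ns Q x j r"
  using assms(3,4)
proof (induction j arbitrary: r)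
  case 0
  then show ?case using first by simp
next
  case (Suc j)
  have "aff ns P (Suc j) (hid ns P x j) r = aff ns Q (Suc j) (hid ns Q x j) r"
  proof (rule aff_cong)
    show "hid ns P x j c = hid ns Q x j c" if "c < ns!(Suc j)" for c
      using Suc that by simp
    show "P (layer_offset ns (Suc j) + r * (ns!(Suc j) + 1) + c)
        = Q (layer_offset ns (Suc j) + r * (ns!(Suc j) + 1) + c)" if "c \<le> ns!(Suc j)" for c
      using param_index_less_nparams[OF Suc.prems(2) that Suc.prems(1)]
        layer_offset_mono[of 1 "Suc j" ns]
      by (intro PQ) auto
  qed
  then show ?case by simp
qed

lemma net_cong_first_layer:
  assumes "length ns \<ge> 3" "\<forall>w\<in>set ns. w > 0"
    and PQ: "\<And>p. layer_offset ns 1 \<le> p \<Longrightarrow> p < nparams ns \<Longrightarrow> P p = Q p"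
    and first: "\<And>r. r < ns!1 \<Longrightarrow> hid ns P x 0 r = hid ns Q x 0 r"
  shows "net ns P x = net ns Q x"
proof -
  obtain j where j: "length ns - 2 = Suc j" "length ns - 3 = j" "Suc (Suc j) < length ns"
    using assms(1) by (intro that[of "length ns - 3"]) auto
  have "0 < ns!(Suc (Suc j))" using assms(2) j(3) by simp
  then have "aff ns P (Suc j) (hid ns P x j) 0 = aff ns Q (Suc j) (hid ns Q x j) 0"
    using hid_cong[OF PQ first] param_index_less_nparams[of 0 ns "Suc j"]
      layer_offset_mono[of 1 "Suc j" ns] j(3)
    by (intro aff_cong PQ) auto
  then show ?thesis unfolding net_def j(1,2) .
qed

lemma net_cong:
  assumes "length ns \<ge> 3" "\<forall>w\<in>set ns. w > 0" and PQ: "\<And>p. p < nparams ns \<Longrightarrow> P p = Q p"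
  shows "net ns P x = net ns Q x"
proof (rule net_cong_first_layer[OF assms(1,2)])
  show "P p = Q p" if "p < nparams ns" for p using PQ that .
  fix r assume "r < ns!1"
  then show "hid ns P x 0 r = hid ns Q x 0 r"
    using param_index_less_nparams[of r ns 0] assms(1)
    by (simp only: hid.simps, intro arg_cong[where f=heaviside] aff_cong PQ) auto
qed

lemma heaviside_tendsto:
  assumes "(g \<longlongrightarrow> t) F" "t \<noteq> 0"
  shows "((\<lambda>n. heaviside (g n)) \<longlongrightarrow> heaviside t) F"
proof (rule tendsto_eventually)
  show "\<forall>\<^sub>F n in F. heaviside (g n) = heaviside t"
  proof (cases "t > 0")
    case True
    with order_tendstoD(1)[OF assms(1), of 0] show ?thesis
      by (auto elim!: eventually_mono simp: heaviside_def)
  next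
    case False
    with assms(2) order_tendstoD(2)[OF assms(1), of 0] show ?thesis
      by (auto elim!: eventually_mono simp: heaviside_def)
  qed
qed

lemma aff_tendsto:
  assumes "\<And>p. (\<lambda>n. Ps n p) \<longlonglongrightarrow> P p"
    and "\<And>c. c < ns!j \<Longrightarrow> (\<lambda>n. ys n c) \<longlonglongrightarrow> y c"
  shows "(\<lambda>n. aff ns (Ps n) j (ys n) r) \<longlonglongrightarrow> aff ns P j y r"
  unfolding aff_def wt_def bs_def using assms by (intro tendsto_intros) auto

lemma net_tendsto_params:
  assumes "length ns \<ge> 3" and lim: "\<And>p. (\<lambda>n. Ps n p) \<longlonglongrightarrow> P p"
    and "\<And>r. r < ns!1 \<Longrightarrow> aff ns P 0 x r \<noteq> 0"
  shows "(\<lambda>n. net ns (Ps n) x) \<longlonglongrightarrow> net ns P x"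
proof -
  have hid: "(\<lambda>n. hid ns (Ps n) x j r) \<longlonglongrightarrow> hid ns P x j r" if "r < ns!(Suc j)" for j r
    using that
  proof (induction j arbitrary: r)
    case 0
    then show ?case using assms(3) lim by (auto intro!: heaviside_tendsto aff_tendsto)
  next
    case (Suc j)
    then show ?case unfolding hid.simps relu_def using lim by (intro tendsto_intros aff_tendsto)
  qed
  obtain j where j: "length ns - 2 = Suc j" "length ns - 3 = j"
    using assms(1) by (intro that[of "length ns - 3"]) auto
  show ?thesis unfolding net_def j using lim hid by (intro aff_tendsto)
qed

lemma aff_bound:
  assumes "\<And>p. \<bar>P p\<bar> \<le> M" "\<And>c. \<bar>y c\<bar> \<le> B"
  shows "\<bar>aff ns P j y r\<bar> \<le> M * (real (ns!j) * B + 1)"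
proof -
  have "\<bar>aff ns P j y r\<bar> \<le> (\<Sum>c<ns!j. \<bar>wt ns P j r c * y c\<bar>) + \<bar>bs ns P j r\<bar>"
    unfolding aff_def by (rule order_trans[OF abs_triangle_ineq]) (simp add: sum_abs)
  also have "\<dots> \<le> (\<Sum>c<ns!j. M * B) + M"
    unfolding wt_def bs_def abs_mult using assms
    by (intro add_mono sum_mono mult_mono) (auto intro: order_trans[OF abs_ge_zero])
  also have "\<dots> = M * (real (ns!j) * B + 1)" by (simp add: algebra_simps)
  finally show ?thesis .
qed

lemma hid_bounded: "\<exists>B. \<forall>P x r. (\<forall>p. \<bar>P p\<bar> \<le> M) \<longrightarrow> \<bar>hid ns P x j r\<bar> \<le> B"
proof (induction j)
  case 0
  show ?case by (rule exI[of _ 1]) (simp add: heaviside_def)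
next
  case (Suc j)
  then obtain B where B: "\<And>P x r. \<forall>p. \<bar>P p\<bar> \<le> M \<Longrightarrow> \<bar>hid ns P x j r\<bar> \<le> B" by blast
  have "\<bar>hid ns P x (Suc j) r\<bar> \<le> M * (real (ns!Suc j) * B + 1)" if "\<forall>p. \<bar>P p\<bar> \<le> M" for P x r
  proof -
    have "\<bar>hid ns P x (Suc j) r\<bar> \<le> \<bar>aff ns P (Suc j) (hid ns P x j) r\<bar>"
      by (simp add: relu_def)
    also have "\<dots> \<le> M * (real (ns!Suc j) * B + 1)"
      using that B by (intro aff_bound) auto
    finally show ?thesis .
  qed
  then show ?case by blast
qed

lemma net_bounded: "\<exists>C. \<forall>P x. (\<forall>p. \<bar>P p\<bar> \<le> M) \<longrightarrow> \<bar>net ns P x\<bar> \<le> C"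
proof -
  obtain B where "\<And>P x r. \<forall>p. \<bar>P p\<bar> \<le> M \<Longrightarrow> \<bar>hid ns P x (length ns - 3) r\<bar> \<le> B"
    using hid_bounded by blast
  then show ?thesis unfolding net_def using aff_bound
    by (intro exI[of _ "M * (real (ns!(length ns - 2)) * B + 1)"]) blast
qed

lemma heaviside_borel[measurable]: "heaviside \<in> borel_measurable borel"
  unfolding heaviside_def[abs_def] by measurable

lemma relu_borel[measurable]: "relu \<in> borel_measurable borel"
  unfolding relu_def[abs_def] by measurable

lemma aff_measurable:
  assumes "\<And>c. (\<lambda>x. y x c) \<in> borel_measurable M"
  shows "(\<lambda>x. aff ns P j (y x) r) \<in> borel_measurable M"
  unfolding aff_def using assms by measurable

lemma net_measurable:
  assumes "\<And>c. (\<lambda>x. y x c) \<in> borel_measurable M"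
  shows "(\<lambda>x. net ns P (y x)) \<in> borel_measurable M"
proof -
  have "(\<lambda>x. hid ns P (y x) j r) \<in> borel_measurable M" for j r
  proof (induction j arbitrary: r)
    case 0
    show ?case using aff_measurable[OF assms] by simp
  next
    case (Suc j)
    show ?case using aff_measurable[OF Suc.IH] by simp
  qed
  then show ?thesis unfolding net_def by (rule aff_measurable)
qed

lemma aff_first_layer:
  assumes "ns!0 = d"
  shows "aff ns P 0 y r = (\<Sum>c<d. P (r * (d + 1) + c) * y c) + P (r * (d + 1) + d)"
  using assms by (simp add: aff_def wt_def bs_def layer_offset_def)

lemma row_index_div_mod:
  fixes r c d :: nat
  assumes "c \<le> d"
  shows "(r * (d + 1) + c) div (d + 1) = r" "(r * (d + 1) + c) mod (d + 1) = c"
proof -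
  have "r * (d + 1) + c = c + (d + 1) * r" by simp
  then show "(r * (d + 1) + c) div (d + 1) = r" "(r * (d + 1) + c) mod (d + 1) = c"
    using assms by (simp_all only: div_mult_self2 mod_mult_self2) simp_all
qed

lemma heaviside_add_sign:
  assumes "\<bar>s\<bar> < 1"
  shows "heaviside (s + (if b \<ge> 0 then 1 else -1)) = heaviside b"
  using assms by (auto simp: heaviside_def)

lemma small_weights_sum_abs_less_1:
  fixes y :: "nat \<Rightarrow> real"
  assumes "\<forall>c<d. \<bar>y c\<bar> \<le> R"
  shows "\<bar>\<Sum>c<d. y c / (real d * \<bar>R\<bar> + 1)\<bar> < 1"
proof -
  have den: "real d * \<bar>R\<bar> + 1 > 0" by (simp add: add_nonneg_pos)
  have "\<bar>\<Sum>c<d. y c / (real d * \<bar>R\<bar> + 1)\<bar> \<le> (\<Sum>c<d. \<bar>R\<bar> / (real d * \<bar>R\<bar> + 1))"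
    using assms den
    by (intro order_trans[OF sum_abs] sum_mono) (auto simp: abs_divide intro!: divide_right_mono)
  also have "\<dots> < 1" using den by (simp add: divide_less_eq)
  finally show ?thesis .
qed

lemma net_revive_dead_neurons:
  assumes "length ns \<ge> 3" "\<forall>w\<in>set ns. w > 0" and d: "ns!0 = d" "d > 0"
    and X: "\<forall>y\<in>X. \<forall>c<d. \<bar>y c\<bar> \<le> R"
  obtains Q where "\<And>y. y \<in> X \<Longrightarrow> net ns Q y = net ns P y"
    and "\<And>r. r < ns!1 \<Longrightarrow> \<exists>c<d. Q (r * (d + 1) + c) \<noteq> 0"
proof -
  define dead where "dead r \<longleftrightarrow> (\<forall>c<d. P (r * (d + 1) + c) = 0)" for r
  define \<epsilon> where "\<epsilon> = 1 / (real d * \<bar>R\<bar> + 1)"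
  have "\<epsilon> > 0" by (simp add: \<epsilon>_def add_nonneg_pos)
  \<comment> \<open>On \<open>X\<close> the new preactivation of a dead row stays within distance 1 of \<open>\<plusminus>1\<close>,
    so it has the sign of the old bias.\<close>
  define Q where "Q p = (if p < (d + 1) * ns!1 \<and> dead (p div (d + 1))
      then if p mod (d + 1) < d then \<epsilon> else if P p \<ge> 0 then 1 else -1
      else P p)" for p
  have Q_row: "Q (r * (d + 1) + c) = (if dead r
      then if c < d then \<epsilon> else if P (r * (d + 1) + c) \<ge> 0 then 1 else -1
      else P (r * (d + 1) + c))" if "r < ns!1" "c \<le> d" for r c
  proof -
    have "r * (d + 1) + c < (d + 1) * ns!1"
      using param_index_less_layer_offset[of r ns 0 c] that d(1) by (simp add: layer_offset_Suc)
    then show ?thesis unfolding Q_def row_index_div_mod[OF that(2)] by simp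
  qed
  have "net ns Q y = net ns P y" if "y \<in> X" for y
  proof (rule net_cong_first_layer[OF assms(1,2)])
    show "Q p = P p" if "layer_offset ns 1 \<le> p" for p
      using that d(1) by (simp add: Q_def layer_offset_Suc)
    fix r assume r: "r < ns!1"
    show "hid ns Q y 0 r = hid ns P y 0 r"
    proof (cases "dead r")
      case False
      then show ?thesis using Q_row[OF r] by (simp add: aff_first_layer[OF d(1)])
    next
      case True
      have "\<bar>\<Sum>c<d. \<epsilon> * y c\<bar> < 1"
        using small_weights_sum_abs_less_1[of d y R] X \<open>y \<in> X\<close> by (simp add: \<epsilon>_def)
      then show ?thesis
        using True Q_row[OF r] heaviside_add_sign
        by (simp add: aff_first_layer[OF d(1)] dead_def)
    qed
  qed
  moreover have "\<exists>c<d. Q (r * (d + 1) + c) \<noteq> 0" if r: "r < ns!1" for r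
  proof (cases "dead r")
    case True
    then show ?thesis using Q_row[OF r, of 0] d(2) \<open>\<epsilon> > 0\<close> by (intro exI[of _ 0]) auto
  next
    case False
    then obtain c where "c < d" "P (r * (d + 1) + c) \<noteq> 0" by (auto simp: dead_def)
    then show ?thesis using False Q_row[OF r, of c] by (intro exI[of _ c]) auto
  qed
  ultimately show thesis by (rule that)
qed

lemma negligible_imp_null_sets_lborel:
  fixes S :: "'a::euclidean_space set"
  assumes "S \<in> sets borel" "negligible S"
  shows "S \<in> null_sets lborel"
  using assms by (simp add: negligible_iff_null_sets null_sets_completion_iff)

lemma null_sets_lborel_Union_lowdim_subspaces:
  fixes F :: "'a::euclidean_space set set"
  assumes "finite F" "\<And>S. S \<in> F \<Longrightarrow> subspace S \<and> dim S < DIM('a)"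
  shows "\<Union>F \<in> null_sets lborel"
  using assms by (intro negligible_imp_null_sets_lborel borel_closed closed_Union negligible_Union)
    (auto intro: closed_subspace negligible_lowdim)

lemma subspace_coordinates_zero_cart: "subspace {x :: real^'n. \<forall>i\<in>K. x $ i = 0}"
  by (auto simp: subspace_def)

lemma dim_coordinates_zero_cart: "dim {x :: real^'n. \<forall>i\<in>K. x $ i = 0} = CARD('n) - card K"
proof -
  have "{x :: real^'n. \<forall>i\<in>K. x $ i = 0} = {x. \<forall>i. i \<notin> UNIV - K \<longrightarrow> x $ i = 0}" by auto
  then have "dim {x :: real^'n. \<forall>i\<in>K. x $ i = 0} = card (UNIV - K)"
    unfolding dim_vec_eq[symmetric] by (simp only: dim_substandard_cart)
  then show ?thesis by (simp add: card_Diff_subset)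
qed

lemma nn_set_integral_square_tendsto_0:
  fixes f :: "nat \<Rightarrow> 'a \<Rightarrow> real"
  assumes [measurable]: "\<Omega> \<in> sets M" and "emeasure M \<Omega> < \<infinity>"
    and [measurable]: "\<And>n. f n \<in> borel_measurable M"
    and bound: "\<And>n x. \<bar>f n x\<bar> \<le> C"
    and lim: "AE x in M. (\<lambda>n. f n x) \<longlonglongrightarrow> 0"
  shows "(\<lambda>n. \<integral>\<^sup>+ x\<in>\<Omega>. ennreal ((f n x)\<^sup>2) \<partial>M) \<longlonglongrightarrow> 0"
proof -
  have "(\<lambda>n. \<integral>\<^sup>+ x. ennreal ((f n x)\<^sup>2) * indicator \<Omega> x \<partial>M) \<longlonglongrightarrow> (\<integral>\<^sup>+ x. 0 \<partial>M)"
  proof (rule nn_integral_dominated_convergence[where w="\<lambda>x. ennreal (C\<^sup>2) * indicator \<Omega> x"])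
    show "AE x in M. ennreal ((f n x)\<^sup>2) * indicator \<Omega> x \<le> ennreal (C\<^sup>2) * indicator \<Omega> x" for n
    proof (intro AE_I2 mult_right_mono ennreal_leI)
      fix x
      show "(f n x)\<^sup>2 \<le> C\<^sup>2" using power_mono[OF bound abs_ge_zero, of n x 2] by simp
    qed simp
    show "(\<integral>\<^sup>+ x. ennreal (C\<^sup>2) * indicator \<Omega> x \<partial>M) < \<infinity>"
      using assms(2) by (simp add: nn_integral_cmult_indicator ennreal_mult_less_top)
    show "AE x in M. (\<lambda>n. ennreal ((f n x)\<^sup>2) * indicator \<Omega> x) \<longlonglongrightarrow> 0"
      using lim
    proof eventually_elim
      case (elim x)
      then have "(\<lambda>n. ennreal ((f n x)\<^sup>2)) \<longlonglongrightarrow> ennreal (0\<^sup>2)"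
        by (intro tendsto_ennrealI tendsto_power)
      then show ?case by (simp add: indicator_def)
    qed
  qed measurable
  then show ?thesis by simp
qed

locale hnn_architecture =
  fixes ns :: "nat list" and enum :: "nat \<Rightarrow> 'm::finite" and ein :: "nat \<Rightarrow> 'd::finite"
  assumes length_ns: "length ns \<ge> 3" and input_width: "ns!0 = CARD('d)"
    and widths_pos: "\<forall>w\<in>set ns. w > 0" and card_params: "CARD('m) = nparams ns"
    and bij_enum: "bij_betw enum {..<CARD('m)} UNIV" and bij_ein: "bij_betw ein {..<CARD('d)} UNIV"
begin

definition params :: "real^'m \<Rightarrow> nat \<Rightarrow> real" where
  "params \<Theta> = (\<lambda>p. \<Theta> $ enum p)"

definition inputs :: "real^'d \<Rightarrow> nat \<Rightarrow> real" where
  "inputs x = (\<lambda>c. x $ ein c)"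

definition first_weight :: "real^'m \<Rightarrow> nat \<Rightarrow> real^'d" where
  "first_weight \<Theta> r = (\<chi> i. \<Theta> $ enum (r * (CARD('d) + 1) + the_inv_into {..<CARD('d)} ein i))"

definition first_bias :: "real^'m \<Rightarrow> nat \<Rightarrow> real" where
  "first_bias \<Theta> r = \<Theta> $ enum (r * (CARD('d) + 1) + CARD('d))"

definition degenerate :: "(real^'m) set" where
  "degenerate = {\<Theta>. \<exists>r<ns!1. first_weight \<Theta> r = 0}"

lemma hnn_eq_net: "hnn ns enum ein \<Theta> x = net ns (params \<Theta>) (inputs x)"
  by (simp add: hnn_def params_def inputs_def)

lemma first_layer_index_less:
  assumes "r < ns!1" "c \<le> CARD('d)"
  shows "r * (CARD('d) + 1) + c < CARD('m)"
  using param_index_less_nparams[of r ns 0 c] assms length_ns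
  by (simp add: card_params input_width layer_offset_def)

lemma first_weight_nth:
  assumes "c < CARD('d)"
  shows "first_weight \<Theta> r $ ein c = \<Theta> $ enum (r * (CARD('d) + 1) + c)"
  using assms the_inv_into_f_f[OF bij_betw_imp_inj_on[OF bij_ein]]
  by (simp add: first_weight_def)

lemma first_weight_eq_0_iff:
  "first_weight \<Theta> r = 0 \<longleftrightarrow> (\<forall>c<CARD('d). \<Theta> $ enum (r * (CARD('d) + 1) + c) = 0)"
proof
  assume zero: "\<forall>c<CARD('d). \<Theta> $ enum (r * (CARD('d) + 1) + c) = 0"
  show "first_weight \<Theta> r = 0"
    unfolding vec_eq_iff
  proof
    fix i
    obtain c where "c < CARD('d)" "i = ein c"
      using bij_betw_imp_surj_on[OF bij_ein] by (metis UNIV_I imageE lessThan_iff)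
    then show "first_weight \<Theta> r $ i = 0 $ i" using zero by (simp add: first_weight_nth)
  qed
qed (metis first_weight_nth zero_index)

lemma first_preactivation:
  "aff ns (params \<Theta>) 0 (inputs x) r = first_weight \<Theta> r \<bullet> x + first_bias \<Theta> r"
proof -
  have "first_weight \<Theta> r \<bullet> x = (\<Sum>i\<in>UNIV. first_weight \<Theta> r $ i * x $ i)"
    by (simp add: inner_vec_def)
  also have "\<dots> = (\<Sum>c<CARD('d). first_weight \<Theta> r $ ein c * x $ ein c)"
    using bij_ein by (rule sum.reindex_bij_betw[symmetric])
  finally show ?thesis
    by (simp add: aff_first_layer[OF input_width] first_weight_nth first_bias_def params_def
        inputs_def)
qed

lemma degenerate_eq_Union_subspaces:
  "\<exists>F. finite F \<and> degenerate = \<Union>F \<and> (\<forall>S\<in>F. subspace S \<and> dim S = CARD('m) - CARD('d))"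
proof (intro exI conjI)
  define K where "K r = (\<lambda>c. enum (r * (CARD('d) + 1) + c)) ` {..<CARD('d)}" for r
  have row: "{\<Theta>. first_weight \<Theta> r = 0} = {\<Theta>. \<forall>i\<in>K r. \<Theta> $ i = 0}" for r
    by (auto simp: first_weight_eq_0_iff K_def)
  have "card (K r) = CARD('d)" if "r < ns!1" for r
  proof -
    have "inj_on (\<lambda>c. enum (r * (CARD('d) + 1) + c)) {..<CARD('d)}"
      using inj_onD[OF bij_betw_imp_inj_on[OF bij_enum]] first_layer_index_less[OF that]
      by (intro inj_onI) fastforce
    then show ?thesis by (simp add: K_def card_image)
  qed
  then show "\<forall>S \<in> (\<lambda>r. {\<Theta>. first_weight \<Theta> r = 0}) ` {..<ns!1}.
      subspace S \<and> dim S = CARD('m) - CARD('d)"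
    by (auto simp: row subspace_coordinates_zero_cart dim_coordinates_zero_cart)
qed (auto simp: degenerate_def)

lemma hnn_tendsto_params:
  assumes "\<Theta>s \<longlonglongrightarrow> \<Theta>" and "\<And>r. r < ns!1 \<Longrightarrow> first_weight \<Theta> r \<bullet> x + first_bias \<Theta> r \<noteq> 0"
  shows "(\<lambda>n. hnn ns enum ein (\<Theta>s n) x) \<longlonglongrightarrow> hnn ns enum ein \<Theta> x"
  unfolding hnn_eq_net
proof (rule net_tendsto_params[OF length_ns])
  show "(\<lambda>n. params (\<Theta>s n) p) \<longlonglongrightarrow> params \<Theta> p" for p
    unfolding params_def by (intro tendsto_vec_nth assms(1))
  show "aff ns (params \<Theta>) 0 (inputs x) r \<noteq> 0" if "r < ns!1" for r
    using assms(2)[OF that] by (simp add: first_preactivation)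
qed

lemma hnn_bounded: "\<exists>C. \<forall>\<Theta> x. norm \<Theta> \<le> M \<longrightarrow> \<bar>hnn ns enum ein \<Theta> x\<bar> \<le> C"
proof -
  obtain C where "\<And>P x. \<forall>p. \<bar>P p\<bar> \<le> M \<Longrightarrow> \<bar>net ns P x\<bar> \<le> C"
    using net_bounded by blast
  moreover have "\<bar>params \<Theta> p\<bar> \<le> norm \<Theta>" for \<Theta> p
    unfolding params_def by (rule component_le_norm_cart)
  ultimately show ?thesis unfolding hnn_eq_net by (meson order_trans)
qed

lemma hnn_measurable[measurable]: "hnn ns enum ein \<Theta> \<in> borel_measurable lborel"
  unfolding hnn_eq_net[abs_def] inputs_def by (intro net_measurable) simp

lemma hnn_L2_continuous:
  assumes "\<Theta> \<notin> degenerate" "\<Theta>s \<longlonglongrightarrow> \<Theta>" "\<Omega> \<in> sets lborel" "emeasure lborel \<Omega> < \<infinity>"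
  shows "(\<lambda>n. \<integral>\<^sup>+ x\<in>\<Omega>. ennreal ((hnn ns enum ein (\<Theta>s n) x - hnn ns enum ein \<Theta> x)\<^sup>2) \<partial>lborel)
    \<longlonglongrightarrow> 0"
proof -
  obtain K where K: "\<And>n. norm (\<Theta>s n) \<le> K"
    using convergent_imp_Bseq[of \<Theta>s] assms(2) unfolding Bseq_def convergent_def by auto
  obtain C where C: "\<And>\<Theta>' x. norm \<Theta>' \<le> max K (norm \<Theta>) \<Longrightarrow> \<bar>hnn ns enum ein \<Theta>' x\<bar> \<le> C"
    using hnn_bounded by blast
  have bound: "\<bar>hnn ns enum ein (\<Theta>s n) x - hnn ns enum ein \<Theta> x\<bar> \<le> 2 * C" for n x
  proof -
    have "\<bar>hnn ns enum ein (\<Theta>s n) x\<bar> \<le> C" using K[of n] by (intro C) (simp add: le_max_iff_disj)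
    moreover have "\<bar>hnn ns enum ein \<Theta> x\<bar> \<le> C" by (intro C) simp
    ultimately show ?thesis using abs_triangle_ineq4 by (smt (verit))
  qed
  define H where "H = (\<Union>r<ns!1. {x. first_weight \<Theta> r \<bullet> x = - first_bias \<Theta> r})"
  have H_null: "H \<in> null_sets lborel"
    using assms(1) unfolding H_def degenerate_def
    by (intro negligible_imp_null_sets_lborel borel_closed closed_Union negligible_Union)
      (auto simp: closed_hyperplane negligible_hyperplane)
  have lim: "AE x in lborel. (\<lambda>n. hnn ns enum ein (\<Theta>s n) x - hnn ns enum ein \<Theta> x) \<longlonglongrightarrow> 0"
    using AE_not_in[OF H_null]
    by (rule eventually_mono) (auto simp: H_def eq_neg_iff_add_eq_0 intro!: LIM_zero hnn_tendsto_params assms(2))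
  show ?thesis
    using assms(3,4) borel_measurable_diff[OF hnn_measurable hnn_measurable] bound lim
    by (rule nn_set_integral_square_tendsto_0)
qed

lemma hnn_nondegenerate_representative:
  assumes "bounded \<Omega>"
  shows "\<exists>\<Theta>'. \<Theta>' \<notin> degenerate \<and> (\<forall>x\<in>\<Omega>. hnn ns enum ein \<Theta> x = hnn ns enum ein \<Theta>' x)"
proof -
  obtain R where R: "\<And>x. x \<in> \<Omega> \<Longrightarrow> norm x \<le> R" using assms unfolding bounded_iff by auto
  have inputs_bound: "\<forall>y\<in>inputs ` \<Omega>. \<forall>c<CARD('d). \<bar>y c\<bar> \<le> R"
  proof (intro ballI allI impI)
    fix y c assume "y \<in> inputs ` \<Omega>"
    then obtain x where "x \<in> \<Omega>" "y = inputs x" by blast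
    then show "\<bar>y c\<bar> \<le> R"
      using order_trans[OF component_le_norm_cart R] by (simp add: inputs_def)
  qed
  obtain Q where Q_net: "\<And>y. y \<in> inputs ` \<Omega> \<Longrightarrow> net ns Q y = net ns (params \<Theta>) y"
    and Q_alive: "\<And>r. r < ns!1 \<Longrightarrow> \<exists>c<CARD('d). Q (r * (CARD('d) + 1) + c) \<noteq> 0"
    using net_revive_dead_neurons[OF length_ns widths_pos input_width _ inputs_bound] by auto
  define \<Theta>' where "\<Theta>' = (\<chi> i. Q (the_inv_into {..<CARD('m)} enum i))"
  have params': "params \<Theta>' p = Q p" if "p < CARD('m)" for p
    using that the_inv_into_f_f[OF bij_betw_imp_inj_on[OF bij_enum]] by (simp add: params_def \<Theta>'_def)
  have "first_weight \<Theta>' r \<noteq> 0" if "r < ns!1" for r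
    using Q_alive[OF that] params' first_layer_index_less[OF that]
    by (auto simp: first_weight_eq_0_iff params_def)
  then have "\<Theta>' \<notin> degenerate" by (simp add: degenerate_def)
  moreover have "hnn ns enum ein \<Theta> x = hnn ns enum ein \<Theta>' x" if "x \<in> \<Omega>" for x
    using that Q_net[of "inputs x"] params' net_cong[OF length_ns widths_pos, of "params \<Theta>'" Q]
    by (simp add: hnn_eq_net card_params)
  ultimately show ?thesis by blast
qed

end

theorem mainTheorem16:
  fixes ns :: "nat list"
    and enum :: "nat \<Rightarrow> 'm::finite"
    and ein :: "nat \<Rightarrow> 'd::finite"
    and \<Omega> :: "(real^'d) set"
  assumes "length ns \<ge> 3" and "ns!0 = CARD('d)" and "last ns = 1"
    and "\<forall>w\<in>set ns. w > 0"
    and "CARD('m) = nparams ns"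
    and "bij_betw enum {..<CARD('m)} UNIV"
    and "bij_betw ein {..<CARD('d)} UNIV"
    and "open \<Omega>" and "connected \<Omega>" and "\<Omega> \<noteq> {}"
    and "emeasure lborel \<Omega> < \<infinity>"
  shows "\<exists>N :: (real^'m) set.
    (\<forall>\<Theta>0. \<Theta>0 \<notin> N \<longrightarrow>
       (\<forall>\<Theta>s :: nat \<Rightarrow> real^'m. \<Theta>s \<longlonglongrightarrow> \<Theta>0 \<longrightarrow>
          (\<lambda>n. \<integral>\<^sup>+ x\<in>\<Omega>. ennreal ((hnn ns enum ein (\<Theta>s n) x - hnn ns enum ein \<Theta>0 x)\<^sup>2) \<partial>lborel)
            \<longlonglongrightarrow> 0))
    \<and> (bounded \<Omega> \<longrightarrow>
       (\<forall>\<Theta>\<in>N. \<exists>\<Theta>'. \<Theta>' \<notin> N \<and> (\<forall>x\<in>\<Omega>. hnn ns enum ein \<Theta> x = hnn ns enum ein \<Theta>' x)))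
    \<and> (\<exists>F. finite F \<and> N = \<Union>F \<and>
         (\<forall>S\<in>F. subspace S \<and> dim S = CARD('m) - CARD('d)))
    \<and> N \<in> null_sets lborel"
proof -
  interpret hnn_architecture ns enum ein
    using assms(1,2,4-7) by unfold_locales
  obtain F where F: "finite F" "degenerate = \<Union>F"
    and F_dim: "\<forall>S\<in>F. subspace S \<and> dim S = CARD('m) - CARD('d)"
    using degenerate_eq_Union_subspaces by blast
  have null: "degenerate \<in> null_sets lborel"
    unfolding F(2) using F(1) F_dim by (intro null_sets_lborel_Union_lowdim_subspaces) auto
  have \<Omega>: "\<Omega> \<in> sets lborel" using assms(8) by simp
  show ?thesis
  proof (intro exI[of _ degenerate] conjI allI impI ballI)
    fix \<Theta>0 and \<Theta>s :: "nat \<Rightarrow> real^'m"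
    assume "\<Theta>0 \<notin> degenerate" "\<Theta>s \<longlonglongrightarrow> \<Theta>0"
    then show "(\<lambda>n. \<integral>\<^sup>+ x\<in>\<Omega>. ennreal ((hnn ns enum ein (\<Theta>s n) x - hnn ns enum ein \<Theta>0 x)\<^sup>2) \<partial>lborel)
        \<longlonglongrightarrow> 0"
      using \<Omega> assms(11) by (rule hnn_L2_continuous)
  next
    fix \<Theta> assume "bounded \<Omega>"
    then show "\<exists>\<Theta>'. \<Theta>' \<notin> degenerate \<and> (\<forall>x\<in>\<Omega>. hnn ns enum ein \<Theta> x = hnn ns enum ein \<Theta>' x)"
      by (rule hnn_nondegenerate_representative)
  qed (use F F_dim null in blast)+
qed

end
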